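(* Fix $d\ge1$, $N\ge1$, $\alpha\ge2$, powers $P_s,P_r>0$, gains $\xi_{u,v}>0$, and positions $\mathbf{s},\mathbf{1},\dots,\mathbf{N}\in\mathbb{R}^d$ with $\mathbf{s}\neq\mathbf{j}$ for all $j$. For a relay position $\mathbf{r}\in\mathbb{R}^d$ let $\mathsf{SNR}_{u,v}=\xi_{u,v}P_u/\|\mathbf{u}-\mathbf{v}\|^{\alpha}$ for $(u,v)\in\{(s,r),(s,j),(r,j)\}$ (an SNR being $+\infty$ when the distance is $0$). With $\mathsf{C}(x)=\tfrac12\log(1+x)$, $f_j(\rho,\mathbf{r})=\mathsf{SNR}_{s,j}+\mathsf{SNR}_{r,j}+2\rho\sqrt{\mathsf{SNR}_{s,j}\mathsf{SNR}_{r,j}}$, $g_j(\rho,\mathbf{r})=(1-\rho^2)(\mathsf{SNR}_{s,j}+\mathsf{SNR}_{s,r})$ and $$R_{CS}(\rho,\mathbf{r})=\min_{1\le j\le N}\min\big(\mathsf{C}(f_j(\rho,\mathbf{r})),\mathsf{C}(g_j(\rho,\mathbf{r}))\big),$$ $R_{CS}(\rho,\mathbf{r})$ is quasi-concave in $\mathbf{r}\in\mathbb{R}^d$ for every fixed $\rho\in[0,1]$.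
   Context: Setting: real AWGN multicast relay channel (cut-set bound) with source $s$, relay at position $\mathbf{r}$, destinations $1,\dots,N$, path-loss exponent $\alpha$ and channel gains $a_{u,v}=\sqrt{\xi_{u,v}}/\|\mathbf{u}-\mathbf{v}\|^{\alpha/2}$; $\rho$ is the source–relay input correlation coefficient. A function $F$ (possibly taking value $+\infty$) on a convex set is quasi-concave if $F(\lambda x_1+(1-\lambda)x_2)\ge\min(F(x_1),F(x_2))$ for all $x_1,x_2$ and $\lambda\in[0,1]$. *)

theory Defs
  imports "HOL-Analysis.Analysis" "HOL-Library.Extended_Real"
begin

definition quasiconcave_on :: "'a::real_vector set \<Rightarrow> ('a \<Rightarrow> ereal) \<Rightarrow> bool" where
  "quasiconcave_on S F \<longleftrightarrow> convex S \<and>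
     (\<forall>x1\<in>S. \<forall>x2\<in>S. \<forall>l::real. 0 \<le> l \<and> l \<le> 1 \<longrightarrow>
        F (l *\<^sub>R x1 + (1 - l) *\<^sub>R x2) \<ge> min (F x1) (F x2))"

definition SNR :: "real \<Rightarrow> real \<Rightarrow> real \<Rightarrow> 'a::real_normed_vector \<Rightarrow> 'a \<Rightarrow> ereal" where
  "SNR alpha xi P u v =
     (if norm (u - v) = 0 then \<infinity> else ereal (xi * P / norm (u - v) powr alpha))"

definition esqrt :: "ereal \<Rightarrow> ereal" where
  "esqrt x = (if x = \<infinity> then \<infinity> else ereal (sqrt (real_of_ereal x)))"

definition Cap :: "ereal \<Rightarrow> ereal" where
  "Cap x = (if x = \<infinity> then \<infinity> else ereal (ln (1 + real_of_ereal x) / 2))"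

definition f_fun :: "real \<Rightarrow> ereal \<Rightarrow> ereal \<Rightarrow> ereal" where
  "f_fun rho snr_sj snr_rj = snr_sj + snr_rj + ereal (2 * rho) * esqrt (snr_sj * snr_rj)"

definition g_fun :: "real \<Rightarrow> ereal \<Rightarrow> ereal \<Rightarrow> ereal" where
  "g_fun rho snr_sj snr_sr = ereal (1 - rho\<^sup>2) * (snr_sj + snr_sr)"

definition R_CS ::
  "nat \<Rightarrow> real \<Rightarrow> real \<Rightarrow> real \<Rightarrow> real \<Rightarrow> (nat \<Rightarrow> real) \<Rightarrow> (nat \<Rightarrow> real)
   \<Rightarrow> 'a::real_normed_vector \<Rightarrow> (nat \<Rightarrow> 'a) \<Rightarrow> real \<Rightarrow> 'a \<Rightarrow> ereal" where
  "R_CS N alpha Ps Pr xi_sr xi_sd xi_rd s dst rho r =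
     Min ((\<lambda>j. min (Cap (f_fun rho (SNR alpha (xi_sd j) Ps s (dst j))
                                     (SNR alpha (xi_rd j) Pr r (dst j))))
                    (Cap (g_fun rho (SNR alpha (xi_sd j) Ps s (dst j))
                                     (SNR alpha xi_sr Ps s r)))) ` {1..N})"

end

theory Submission imports Defs begin

text \<open>Every SNR is a non-increasing function of the distance to a fixed node, so its
  superlevel sets in the relay position are balls and it is quasi-concave in that position.
  Each capacity term C(f_j) and C(g_j) is a non-decreasing function of a single relay-dependent
  SNR (the source-destination SNR is a finite constant because s is not a destination), and
  non-decreasing transformations as well as finite minima preserve quasi-concavity.\<close>

lemma quasiconcave_on_min:
  assumes "quasiconcave_on S F" "quasiconcave_on S G"
  shows "quasiconcave_on S (\<lambda>x. min (F x) (G x))"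
  unfolding quasiconcave_on_def
proof (intro conjI ballI allI impI)
  show "convex S" using assms by (simp add: quasiconcave_on_def)
  fix x1 x2 and l :: real assume "x1 \<in> S" "x2 \<in> S" "0 \<le> l \<and> l \<le> 1"
  then have "min (F x1) (F x2) \<le> F (l *\<^sub>R x1 + (1 - l) *\<^sub>R x2)"
    and "min (G x1) (G x2) \<le> G (l *\<^sub>R x1 + (1 - l) *\<^sub>R x2)"
    using assms by (simp_all add: quasiconcave_on_def)
  then show "min (min (F x1) (G x1)) (min (F x2) (G x2))
           \<le> min (F (l *\<^sub>R x1 + (1 - l) *\<^sub>R x2)) (G (l *\<^sub>R x1 + (1 - l) *\<^sub>R x2))"
    by (auto simp: min_le_iff_disj)
qed

lemma quasiconcave_on_Min:
  assumes "finite I" "I \<noteq> {}" "\<And>i. i \<in> I \<Longrightarrow> quasiconcave_on S (F i)"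
  shows "quasiconcave_on S (\<lambda>x. Min ((\<lambda>i. F i x) ` I))"
  using assms
proof (induction I rule: finite_ne_induct)
  case (singleton i)
  then show ?case by simp
next
  case (insert i I)
  then show ?case by (simp add: quasiconcave_on_min)
qed

lemma quasiconcave_on_mono_comp:
  assumes F: "quasiconcave_on S F" and range: "\<And>x. x \<in> S \<Longrightarrow> F x \<in> A" and H: "mono_on A H"
  shows "quasiconcave_on S (\<lambda>x. H (F x))"
  unfolding quasiconcave_on_def
proof (intro conjI ballI allI impI)
  show "convex S" using F by (simp add: quasiconcave_on_def)
  fix x1 x2 and l :: real assume x: "x1 \<in> S" "x2 \<in> S" and l: "0 \<le> l \<and> l \<le> 1"
  have "l *\<^sub>R x1 + (1 - l) *\<^sub>R x2 \<in> S"
    using \<open>convex S\<close> x l by (simp add: convexD)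
  moreover have "min (F x1) (F x2) \<le> F (l *\<^sub>R x1 + (1 - l) *\<^sub>R x2)"
    using F x l by (simp add: quasiconcave_on_def)
  ultimately have "H (min (F x1) (F x2)) \<le> H (F (l *\<^sub>R x1 + (1 - l) *\<^sub>R x2))"
    using x range by (intro mono_onD[OF H]) (auto simp: min_def)
  moreover have "min (H (F x1)) (H (F x2)) \<le> H (min (F x1) (F x2))"
    by (metis min.cobounded1 min.cobounded2 min_def)
  ultimately show "min (H (F x1)) (H (F x2)) \<le> H (F (l *\<^sub>R x1 + (1 - l) *\<^sub>R x2))"
    by order
qed

lemma SNR_eq_ereal: "u \<noteq> v \<Longrightarrow> SNR alpha xi P u v = ereal (xi * P / norm (u - v) powr alpha)"
  by (simp add: SNR_def)

lemma SNR_nonneg: "0 \<le> xi * P \<Longrightarrow> 0 \<le> SNR alpha xi P u v"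
  by (simp add: SNR_def)

lemma SNR_commute: "SNR alpha xi P u v = SNR alpha xi P v u"
  by (simp add: SNR_def norm_minus_commute)

lemma SNR_antimono:
  assumes "0 \<le> xi * P" "0 < alpha" "norm (u - v) \<le> norm (u' - v')"
  shows "SNR alpha xi P u' v' \<le> SNR alpha xi P u v"
proof (cases "u = v")
  case False
  then have "0 < norm (u - v)" by simp
  moreover have "norm (u - v) powr alpha \<le> norm (u' - v') powr alpha"
    using assms by (intro powr_mono2) auto
  ultimately show ?thesis
    using assms by (auto simp: SNR_def intro!: divide_left_mono mult_pos_pos)
qed (simp add: SNR_def)

lemma norm_convex_comb_le_max:
  fixes x1 x2 p :: "'a::real_normed_vector"
  assumes "0 \<le> l" "l \<le> 1"
  shows "norm (l *\<^sub>R x1 + (1 - l) *\<^sub>R x2 - p) \<le> max (norm (x1 - p)) (norm (x2 - p))"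
proof -
  have "norm (l *\<^sub>R x1 + (1 - l) *\<^sub>R x2 - p) = norm (l *\<^sub>R (x1 - p) + (1 - l) *\<^sub>R (x2 - p))"
    by (simp add: algebra_simps)
  also have "\<dots> \<le> l * norm (x1 - p) + (1 - l) * norm (x2 - p)"
    using assms by (metis abs_of_nonneg diff_ge_0_iff_ge norm_scaleR norm_triangle_ineq)
  also have "\<dots> \<le> max (norm (x1 - p)) (norm (x2 - p))"
    using assms by (intro convex_bound_le) auto
  finally show ?thesis .
qed

lemma quasiconcave_on_SNR:
  assumes "0 \<le> xi * P" "0 < alpha"
  shows "quasiconcave_on UNIV (\<lambda>u. SNR alpha xi P u v)"
  unfolding quasiconcave_on_def
proof (intro conjI ballI allI impI)
  fix x1 x2 :: 'a and l :: real assume "0 \<le> l \<and> l \<le> 1"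
  then have "norm (l *\<^sub>R x1 + (1 - l) *\<^sub>R x2 - v) \<le> norm (x1 - v)
           \<or> norm (l *\<^sub>R x1 + (1 - l) *\<^sub>R x2 - v) \<le> norm (x2 - v)"
    using norm_convex_comb_le_max[of l x1 x2 v] by linarith
  then show "min (SNR alpha xi P x1 v) (SNR alpha xi P x2 v)
           \<le> SNR alpha xi P (l *\<^sub>R x1 + (1 - l) *\<^sub>R x2) v"
    using SNR_antimono[OF assms] by (meson min.coboundedI1 min.coboundedI2)
qed simp

lemma mono_on_Cap: "mono_on {0..} Cap"
proof (rule mono_onI)
  fix x y :: ereal assume "x \<in> {0..}" "y \<in> {0..}" "x \<le> y"
  then show "Cap x \<le> Cap y"
    by (cases x; cases y) (auto simp: Cap_def divide_right_mono)
qed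

lemma f_fun_nonneg:
  assumes "0 \<le> a" "0 \<le> rho" "0 \<le> x"
  shows "0 \<le> f_fun rho (ereal a) x"
  using assms by (cases x) (auto simp: f_fun_def esqrt_def)

lemma mono_on_f_fun:
  assumes "0 \<le> a" "0 \<le> rho"
  shows "mono_on {0..} (f_fun rho (ereal a))"
proof (rule mono_onI)
  fix x y :: ereal assume "x \<in> {0..}" "y \<in> {0..}" "x \<le> y"
  with assms show "f_fun rho (ereal a) x \<le> f_fun rho (ereal a) y"
  proof (cases x; cases y)
    fix b c assume "x = ereal b" "y = ereal c"
    with assms \<open>x \<le> y\<close> \<open>x \<in> {0..}\<close> have "rho * sqrt (a * b) \<le> rho * sqrt (a * c)"
      by (auto intro!: mult_left_mono)
    with \<open>x = ereal b\<close> \<open>y = ereal c\<close> \<open>x \<le> y\<close> show ?thesis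
      by (simp add: f_fun_def esqrt_def)
  qed (auto simp: f_fun_def esqrt_def)
qed

lemma g_fun_nonneg:
  assumes "0 \<le> a" "0 \<le> rho" "rho \<le> 1" "0 \<le> x"
  shows "0 \<le> g_fun rho (ereal a) x"
proof -
  have "0 \<le> 1 - rho\<^sup>2" using assms by (simp add: power_le_one)
  then show ?thesis using assms unfolding g_fun_def by simp
qed

lemma mono_on_g_fun:
  assumes "0 \<le> rho" "rho \<le> 1"
  shows "mono_on {0..} (g_fun rho (ereal a))"
proof (rule mono_onI)
  have "0 \<le> 1 - rho\<^sup>2" using assms by (simp add: power_le_one)
  then show "g_fun rho (ereal a) x \<le> g_fun rho (ereal a) y" if "x \<le> y" for x y
    using that unfolding g_fun_def by (intro ereal_mult_left_mono add_left_mono) auto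
qed

theorem theorem4:
  fixes N :: nat and alpha Ps Pr xi_sr :: real and xi_sd xi_rd :: "nat \<Rightarrow> real"
    and s :: "real ^ 'd" and dst :: "nat \<Rightarrow> real ^ 'd" and rho :: real
  assumes "N \<ge> 1" and "alpha \<ge> 2" and "Ps > 0" and "Pr > 0" and "xi_sr > 0"
    and "\<And>j. j \<in> {1..N} \<Longrightarrow> xi_sd j > 0"
    and "\<And>j. j \<in> {1..N} \<Longrightarrow> xi_rd j > 0"
    and "\<And>j. j \<in> {1..N} \<Longrightarrow> s \<noteq> dst j"
    and "0 \<le> rho" and "rho \<le> 1"
  shows "quasiconcave_on UNIV (\<lambda>r. R_CS N alpha Ps Pr xi_sr xi_sd xi_rd s dst rho r)"
proof -
  have "quasiconcave_on UNIV (\<lambda>r. min (Cap (f_fun rho (SNR alpha (xi_sd j) Ps s (dst j))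
                                              (SNR alpha (xi_rd j) Pr r (dst j))))
                                    (Cap (g_fun rho (SNR alpha (xi_sd j) Ps s (dst j))
                                              (SNR alpha xi_sr Ps s r))))"
    if j: "j \<in> {1..N}" for j
  proof -
    define a where "a = xi_sd j * Ps / norm (s - dst j) powr alpha"
    have a: "SNR alpha (xi_sd j) Ps s (dst j) = ereal a" "0 \<le> a"
      using assms(3) assms(6,8)[OF j] by (simp_all add: SNR_eq_ereal a_def)
    have "quasiconcave_on UNIV (\<lambda>r. Cap (f_fun rho (ereal a) (SNR alpha (xi_rd j) Pr r (dst j))))"
      using assms(2,4,9) assms(7)[OF j] a(2)
      by (intro quasiconcave_on_mono_comp[OF quasiconcave_on_SNR, where A = "{0..}"]
            monotone_on_o[OF mono_on_Cap mono_on_f_fun, unfolded comp_def])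
         (auto simp: SNR_nonneg f_fun_nonneg)
    moreover have "quasiconcave_on UNIV (\<lambda>r. Cap (g_fun rho (ereal a) (SNR alpha xi_sr Ps r s)))"
      using assms(2,3,5,9,10) a(2)
      by (intro quasiconcave_on_mono_comp[OF quasiconcave_on_SNR, where A = "{0..}"]
            monotone_on_o[OF mono_on_Cap mono_on_g_fun, unfolded comp_def])
         (auto simp: SNR_nonneg g_fun_nonneg)
    ultimately show ?thesis
      unfolding a(1) SNR_commute[of alpha xi_sr Ps s] by (rule quasiconcave_on_min)
  qed
  then show ?thesis
    unfolding R_CS_def using assms(1) by (intro quasiconcave_on_Min) auto
qed

end
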